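(* Let $\{G^i\}_{i\in I}$, $G^i=(V,\{S^i_v\}_{v\in V},\{u^i_v\}_{v\in V})$, be a finite family of games over the same graph $\Gamma=(V,E)$. If $\langle\langle s^i_v\rangle_{i\in I}\rangle_{v\in V}\in NE(\prod_{i\in I}G^i)$, then $\langle s^{i_0}_v\rangle_{v\in V}\in NE(G^{i_0})$ for each $i_0\in I$.
   Context: A game over a finite simple undirected graph $\Gamma=(V,E)$ is a strategic game with player set $V$, finite strategy sets, and real pay-off functions $u_v$ depending only on the strategies of $v$ and its neighbours. $NE(G)$ is the set of pure Nash equilibria. The product $\prod_{i\in I}G^i$ is the game with player set $V$, strategy sets $S_v=\prod_{i\in I}S^i_v$, and pay-offs $u_v=\sum_{i\in I}u^i_v$ (where $u^i_v$ is evaluated at the $i$-th components of the profile); a profile of the product is written $\langle\langle s^i_v\rangle_{i\in I}\rangle_{v\in V}$. *)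

theory Defs
  imports Complex_Main "HOL-Library.FuncSet"
begin

definition simple_graph :: "'v set \<Rightarrow> ('v \<Rightarrow> 'v \<Rightarrow> bool) \<Rightarrow> bool" where
  "simple_graph V E \<longleftrightarrow> finite V \<and> (\<forall>x y. E x y \<longrightarrow> x \<in> V \<and> y \<in> V)
     \<and> (\<forall>x y. E x y \<longrightarrow> E y x) \<and> (\<forall>x. \<not> E x x)"

definition profiles :: "'v set \<Rightarrow> ('v \<Rightarrow> 's set) \<Rightarrow> ('v \<Rightarrow> 's) set" where
  "profiles V S = {s. \<forall>v\<in>V. s v \<in> S v}"

definition graph_game :: "'v set \<Rightarrow> ('v \<Rightarrow> 'v \<Rightarrow> bool) \<Rightarrow> ('v \<Rightarrow> 's set)
    \<Rightarrow> ('v \<Rightarrow> ('v \<Rightarrow> 's) \<Rightarrow> real) \<Rightarrow> bool" where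
  "graph_game V E S u \<longleftrightarrow> simple_graph V E \<and> (\<forall>v\<in>V. finite (S v)) \<and>
     (\<forall>v\<in>V. \<forall>s\<in>profiles V S. \<forall>t\<in>profiles V S.
        (\<forall>w\<in>V. (w = v \<or> E v w) \<longrightarrow> s w = t w) \<longrightarrow> u v s = u v t)"

definition NE :: "'v set \<Rightarrow> ('v \<Rightarrow> 's set) \<Rightarrow> ('v \<Rightarrow> ('v \<Rightarrow> 's) \<Rightarrow> real)
    \<Rightarrow> ('v \<Rightarrow> 's) set" where
  "NE V S u = {s \<in> profiles V S. \<forall>v\<in>V. \<forall>a\<in>S v. u v (s(v := a)) \<le> u v s}"

definition prod_strats :: "'i set \<Rightarrow> ('i \<Rightarrow> 'v \<Rightarrow> 's set) \<Rightarrow> 'v \<Rightarrow> ('i \<Rightarrow> 's) set" where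
  "prod_strats I S = (\<lambda>v. \<Pi>\<^sub>E i\<in>I. S i v)"

definition prod_payoff :: "'i set \<Rightarrow> ('i \<Rightarrow> 'v \<Rightarrow> ('v \<Rightarrow> 's) \<Rightarrow> real)
    \<Rightarrow> 'v \<Rightarrow> ('v \<Rightarrow> 'i \<Rightarrow> 's) \<Rightarrow> real" where
  "prod_payoff I u = (\<lambda>v \<sigma>. \<Sum>i\<in>I. u i v (\<lambda>w. \<sigma> w i))"

end

theory Submission
  imports Defs
begin

text \<open>Deviating in the product only in the \<open>i\<^sub>0\<close>-th coordinate changes the summed pay-off
  exactly by the change of the \<open>i\<^sub>0\<close>-th pay-off, since the other components of the profile
  are untouched. Hence a profitable deviation in \<open>G\<^sup>i\<^sup>0\<close> would lift to one in the product.\<close>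

lemma component_in_profiles:
  assumes "\<sigma> \<in> profiles V (prod_strats I S)" and "i0 \<in> I"
  shows "(\<lambda>v. \<sigma> v i0) \<in> profiles V (S i0)"
  using assms unfolding profiles_def prod_strats_def by auto

lemma fun_upd_in_prod_strats:
  assumes "x \<in> prod_strats I S v" and "i0 \<in> I" and "a \<in> S i0 v"
  shows "x(i0 := a) \<in> prod_strats I S v"
  using assms unfolding prod_strats_def by (auto simp: PiE_iff extensional_def)

lemma component_fun_upd_coordinate:
  "(\<lambda>w. (\<sigma>(v := (\<sigma> v)(i0 := a))) w i) =
     (if i = i0 then (\<lambda>w. \<sigma> w i0)(v := a) else (\<lambda>w. \<sigma> w i))"
  by (auto simp: fun_eq_iff)

lemma payoff_diff_fun_upd_coordinate:
  fixes u :: "'i \<Rightarrow> 'v \<Rightarrow> ('v \<Rightarrow> 's) \<Rightarrow> real"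
  shows "u i v (\<lambda>w. (\<sigma>(v := (\<sigma> v)(i0 := a))) w i) - u i v (\<lambda>w. \<sigma> w i) =
     (if i = i0 then u i0 v ((\<lambda>w. \<sigma> w i0)(v := a)) - u i0 v (\<lambda>w. \<sigma> w i0) else 0)"
  by (simp only: component_fun_upd_coordinate) (cases "i = i0"; simp)

lemma prod_payoff_fun_upd_coordinate:
  assumes "finite I" and "i0 \<in> I"
  shows "prod_payoff I u v (\<sigma>(v := (\<sigma> v)(i0 := a))) - prod_payoff I u v \<sigma>
       = u i0 v ((\<lambda>w. \<sigma> w i0)(v := a)) - u i0 v (\<lambda>w. \<sigma> w i0)"
proof -
  have "prod_payoff I u v (\<sigma>(v := (\<sigma> v)(i0 := a))) - prod_payoff I u v \<sigma>
      = (\<Sum>i\<in>I. u i v (\<lambda>w. (\<sigma>(v := (\<sigma> v)(i0 := a))) w i) - u i v (\<lambda>w. \<sigma> w i))"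
    unfolding prod_payoff_def by (simp add: sum_subtractf)
  also have "\<dots> = (\<Sum>i\<in>I. if i = i0
                     then u i0 v ((\<lambda>w. \<sigma> w i0)(v := a)) - u i0 v (\<lambda>w. \<sigma> w i0) else 0)"
    by (intro sum.cong refl) (rule payoff_diff_fun_upd_coordinate)
  also have "\<dots> = u i0 v ((\<lambda>w. \<sigma> w i0)(v := a)) - u i0 v (\<lambda>w. \<sigma> w i0)"
    using assms by simp
  finally show ?thesis .
qed

theorem lemma17:
  fixes V :: "'v set" and E :: "'v \<Rightarrow> 'v \<Rightarrow> bool" and I :: "'i set"
    and S :: "'i \<Rightarrow> 'v \<Rightarrow> 's set" and u :: "'i \<Rightarrow> 'v \<Rightarrow> ('v \<Rightarrow> 's) \<Rightarrow> real"
    and \<sigma> :: "'v \<Rightarrow> 'i \<Rightarrow> 's"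
  assumes "finite I"
    and "\<forall>i\<in>I. graph_game V E (S i) (u i)"
    and "\<sigma> \<in> NE V (prod_strats I S) (prod_payoff I u)"
  shows "\<forall>i0\<in>I. (\<lambda>v. \<sigma> v i0) \<in> NE V (S i0) (u i0)"
proof
  fix i0 assume i0: "i0 \<in> I"
  have prof: "\<sigma> \<in> profiles V (prod_strats I S)"
    and best: "\<And>v b. v \<in> V \<Longrightarrow> b \<in> prod_strats I S v \<Longrightarrow>
        prod_payoff I u v (\<sigma>(v := b)) \<le> prod_payoff I u v \<sigma>"
    using assms(3) unfolding NE_def by auto
  have "u i0 v ((\<lambda>w. \<sigma> w i0)(v := a)) \<le> u i0 v (\<lambda>w. \<sigma> w i0)"
    if v: "v \<in> V" and a: "a \<in> S i0 v" for v a
  proof -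
    have "\<sigma> v \<in> prod_strats I S v"
      using prof v unfolding profiles_def by blast
    then have "(\<sigma> v)(i0 := a) \<in> prod_strats I S v"
      using i0 a by (rule fun_upd_in_prod_strats)
    from best[OF v this] show ?thesis
      using prod_payoff_fun_upd_coordinate[OF assms(1) i0, of u v \<sigma> a] by linarith
  qed
  with component_in_profiles[OF prof i0]
  show "(\<lambda>v. \<sigma> v i0) \<in> NE V (S i0) (u i0)"
    unfolding NE_def by blast
qed

end
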